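(* Let $p>0$, $k>0$ and $q=p\,e^{-2k^2}$ with $0<pq<1$, let $\zeta\in\mathbb R$, $t\in\mathbb C$, $x\in\mathbb R$. (a) If $p\,e^{-2\zeta k^2}<1$, then $$E^{(\zeta+1/2)}_{p,q}\big(te^{-kx}\big)e^{-x^2/2}=\frac1{\sqrt{2\pi}}\int_{-\infty}^{\infty}e^{ixy-y^2/2}E^{(\zeta)}_{p,q}\big(te^{iky}\big)\,dy.$$ (b) If $p\,e^{-(2\zeta-1)k^2}<1$, then $$E^{(\zeta-1/2)}_{p,q}\big(te^{ikx}\big)e^{-x^2/2}=\frac1{\sqrt{2\pi}}\int_{-\infty}^{\infty}e^{ixy-y^2/2}E^{(\zeta)}_{p,q}\big(te^{ky}\big)\,dy.$$
   Context: $[p,q;p,q]_n=\prod_{l=1}^n(p^{-l}-q^l)$ ($=1$ for $n=0$). The $(p,q,\zeta)$-exponential is $E^{(\zeta)}_{p,q}(z)=\sum_{n\ge0}\big(\frac qp\big)^{\zeta n^2/2}\frac{z^n}{[p,q;p,q]_n}$ (the case $\mu=\nu=\zeta/2$ of $E^{\mu,\nu}_{p,q}(z)=\sum_n(q^\mu/p^\nu)^{n^2}z^n/[p,q;p,q]_n$). *)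

theory Defs
  imports "HOL-Analysis.Analysis"
begin

definition pq_fact :: "real \<Rightarrow> real \<Rightarrow> nat \<Rightarrow> real" where
  "pq_fact p q n = (\<Prod>l\<in>{1..n}. inverse p ^ l - q ^ l)"

definition pq_exp :: "real \<Rightarrow> real \<Rightarrow> real \<Rightarrow> complex \<Rightarrow> complex" where
  "pq_exp p q \<zeta> z =
     (\<Sum>n. complex_of_real ((q / p) powr (\<zeta> * real n ^ 2 / 2) / pq_fact p q n) * z ^ n)"

end

theory Submission
  imports Defs "HOL-Probability.Probability"
begin

text \<open>
  Both identities are proved termwise. Each monomial of E^(zeta)_{p,q}(t e^(b y)), with
  b = i k in part (a) and b = k in part (b), integrates against exp(i x y - y^2/2) to
  sqrt(2 pi) t^n exp((i x + b n)^2/2) by the Gaussian integral with complex linear term.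
  With q = p exp(-2 k^2) the factor exp(-k^2 n^2/2) resp. exp(k^2 n^2/2) arising here is
  absorbed by the coefficients, since c_(zeta+delta)(n) = c_zeta(n) exp(-delta k^2 n^2); this turns the
  series into E^(zeta+1/2) resp. E^(zeta-1/2) times exp(-x^2/2).
\<close>

lemma gaussian_fourier:
  fixes a :: real
  shows "integrable lborel (\<lambda>y::real. exp (\<i> * of_real a * of_real y - of_real (y\<^sup>2 / 2)))"
    and "(LBINT y. exp (\<i> * of_real a * of_real y - of_real (y\<^sup>2 / 2)))
           = of_real (sqrt (2 * pi) * exp (- (a\<^sup>2) / 2))"
proof -
  have scaled_density: "of_real (sqrt (2 * pi)) * of_real (std_normal_density y)
      = complex_of_real (exp (- (y\<^sup>2) / 2))" for y :: real
  proof -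
    have "sqrt (2 * pi) * std_normal_density y = exp (- (y\<^sup>2) / 2)"
      by (simp add: std_normal_density_def)
    then show ?thesis by (simp only: of_real_mult[symmetric])
  qed
  have density_form: "exp (\<i> * of_real a * of_real y - of_real (y\<^sup>2 / 2))
      = sqrt (2 * pi) *\<^sub>R (std_normal_density y *\<^sub>R iexp (a * y))" for y :: real
  proof -
    have "\<i> * of_real a * of_real y - of_real (y\<^sup>2 / 2) = of_real (- (y\<^sup>2) / 2) + \<i> * of_real (a * y)"
      by (simp add: algebra_simps)
    then have "exp (\<i> * of_real a * of_real y - of_real (y\<^sup>2 / 2)) = of_real (exp (- (y\<^sup>2) / 2)) * iexp (a * y)"
      by (simp only: exp_add exp_of_real)
    also have "\<dots> = sqrt (2 * pi) *\<^sub>R (std_normal_density y *\<^sub>R iexp (a * y))"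
      by (simp only: scaleR_conv_of_real mult.assoc[symmetric] scaled_density)
    finally show ?thesis .
  qed
  have integrable: "integrable lborel (\<lambda>y. std_normal_density y *\<^sub>R iexp (a * y))"
    by (rule Bochner_Integration.integrable_bound[OF integrable_normal_density[where \<mu>=0 and \<sigma>=1]])
       auto
  have "(LBINT y. std_normal_density y *\<^sub>R iexp (a * y)) = char std_normal_distribution a"
    unfolding char_def by (subst integral_density) auto
  also have "\<dots> = of_real (exp (- (a\<^sup>2) / 2))"
    by (simp add: char_std_normal_distribution)
  finally have char: "(LBINT y. std_normal_density y *\<^sub>R iexp (a * y)) = of_real (exp (- (a\<^sup>2) / 2))" .
  show "integrable lborel (\<lambda>y::real. exp (\<i> * of_real a * of_real y - of_real (y\<^sup>2 / 2)))"
    unfolding density_form by (intro integrable_scaleR_right integrable)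
  show "(LBINT y. exp (\<i> * of_real a * of_real y - of_real (y\<^sup>2 / 2)))
           = of_real (sqrt (2 * pi) * exp (- (a\<^sup>2) / 2))"
    unfolding density_form integral_scaleR_right char by (simp add: scaleR_conv_of_real)
qed

text \<open>The Gaussian integral with an arbitrary complex linear term:
  int exp(w y - y^2/2) dy = sqrt(2 pi) exp(w^2/2), obtained from the Fourier case by the
  real shift y = Re w + u.\<close>

lemma gaussian_integral:
  fixes w :: complex
  shows "integrable lborel (\<lambda>y::real. exp (w * of_real y - of_real (y\<^sup>2 / 2)))"
    and "(LBINT y. exp (w * of_real y - of_real (y\<^sup>2 / 2))) = of_real (sqrt (2 * pi)) * exp (w\<^sup>2 / 2)"
proof -
  define m where "m = Re w"
  define a where "a = Im w"
  let ?f = "\<lambda>y::real. exp (w * of_real y - of_real (y\<^sup>2 / 2))"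
  let ?c = "exp (w * of_real m - of_real (m\<^sup>2 / 2))"
  have w: "w = of_real m + \<i> * of_real a"
    by (simp add: m_def a_def complex_eq_iff)
  have shifted: "?f (m + 1 * u) = ?c * exp (\<i> * of_real a * of_real u - of_real (u\<^sup>2 / 2))" for u
  proof -
    have "w * of_real (m + 1 * u) - of_real ((m + 1 * u)\<^sup>2 / 2)
        = (w * of_real m - of_real (m\<^sup>2 / 2)) + (\<i> * of_real a * of_real u - of_real (u\<^sup>2 / 2))"
      by (simp add: w power2_eq_square field_simps)
    then show ?thesis by (simp only: exp_add)
  qed
  have "integrable lborel (\<lambda>u. ?f (m + 1 * u))"
    unfolding shifted by (intro integrable_mult_right gaussian_fourier(1))
  then show "integrable lborel ?f"
    using lborel_integrable_real_affine_iff[of 1 ?f m] by simp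
  have "(LBINT y. ?f y) = \<bar>1\<bar> *\<^sub>R (LBINT u. ?f (m + 1 * u))"
    by (rule lborel_integral_real_affine) simp
  also have "\<dots> = ?c * of_real (sqrt (2 * pi) * exp (- (a\<^sup>2) / 2))"
    unfolding shifted integral_mult_right_zero gaussian_fourier(2) by simp
  also have "\<dots> = of_real (sqrt (2 * pi)) * exp (w * of_real m - of_real (m\<^sup>2 / 2) + of_real (- (a\<^sup>2) / 2))"
    by (simp only: exp_add of_real_mult exp_of_real mult_ac)
  also have "w * of_real m - of_real (m\<^sup>2 / 2) + of_real (- (a\<^sup>2) / 2) = w\<^sup>2 / 2"
    by (simp add: w power2_eq_square field_simps)
  finally show "(LBINT y. ?f y) = of_real (sqrt (2 * pi)) * exp (w\<^sup>2 / 2)" .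
qed

lemma gaussian_integral_real:
  fixes m :: real
  shows "integrable lborel (\<lambda>y. exp (m * y - y\<^sup>2 / 2))"
    and "(LBINT y. exp (m * y - y\<^sup>2 / 2)) = sqrt (2 * pi) * exp (m\<^sup>2 / 2)"
proof -
  have real_form: "exp (of_real m * of_real y - of_real (y\<^sup>2 / 2)) = complex_of_real (exp (m * y - y\<^sup>2 / 2))"
    for y :: real by (simp only: of_real_mult[symmetric] of_real_diff[symmetric] exp_of_real)
  show "integrable lborel (\<lambda>y. exp (m * y - y\<^sup>2 / 2))"
    using integrable_Re[OF gaussian_integral(1)[of "of_real m"]] unfolding real_form by simp
  have "(complex_of_real m)\<^sup>2 / 2 = complex_of_real (m\<^sup>2 / 2)"
    by simp
  then have real_value: "exp ((complex_of_real m)\<^sup>2 / 2) = complex_of_real (exp (m\<^sup>2 / 2))"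
    by (simp only: exp_of_real)
  have "complex_of_real (LBINT y. exp (m * y - y\<^sup>2 / 2)) = complex_of_real (sqrt (2 * pi) * exp (m\<^sup>2 / 2))"
    using gaussian_integral(2)[of "of_real m"]
    unfolding real_form integral_complex_of_real real_value of_real_mult .
  then show "(LBINT y. exp (m * y - y\<^sup>2 / 2)) = sqrt (2 * pi) * exp (m\<^sup>2 / 2)"
    by (simp only: of_real_eq_iff)
qed

lemma integral_weighted_power_series:
  fixes g w :: "real \<Rightarrow> complex" and c :: "nat \<Rightarrow> complex"
  assumes integrable: "\<And>n. integrable lborel (\<lambda>y. g y * w y ^ n)"
    and abs_convergent: "\<And>y. summable (\<lambda>n. norm (c n * w y ^ n))"
    and norm_moments: "summable (\<lambda>n. norm (c n) * (LBINT y. norm (g y * w y ^ n)))"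
  shows "(\<lambda>n. c n * (LBINT y. g y * w y ^ n)) sums (LBINT y. g y * (\<Sum>n. c n * w y ^ n))"
proof -
  define f where "f n y = c n * (g y * w y ^ n)" for n y
  have "integrable lborel (f n)" for n
    unfolding f_def by (intro integrable_mult_right integrable)
  moreover have "AE y in lborel. summable (\<lambda>n. norm (f n y))"
  proof (rule AE_I2)
    fix y
    have "norm (f n y) = norm (g y) * norm (c n * w y ^ n)" for n
      by (simp add: f_def norm_mult)
    then show "summable (\<lambda>n. norm (f n y))"
      using summable_mult[OF abs_convergent[of y]] by presburger
  qed
  moreover have "summable (\<lambda>n. LBINT y. norm (f n y))"
  proof -
    have "norm (f n y) = norm (c n) * norm (g y * w y ^ n)" for n y
      by (simp add: f_def norm_mult)
    then show ?thesis
      using norm_moments by (simp add: integral_mult_right_zero)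
  qed
  ultimately have "(\<lambda>n. integral\<^sup>L lborel (f n)) sums (LBINT y. (\<Sum>n. f n y))"
    by (rule sums_integral)
  moreover have "integral\<^sup>L lborel (f n) = c n * (LBINT y. g y * w y ^ n)" for n
    unfolding f_def by (rule integral_mult_right_zero)
  moreover have "(\<Sum>n. f n y) = g y * (\<Sum>n. c n * w y ^ n)" for y
  proof -
    have "summable (\<lambda>n. c n * w y ^ n)"
      by (rule summable_norm_cancel[OF abs_convergent])
    then show ?thesis
      unfolding f_def by (subst suminf_mult[symmetric]) (simp_all add: mult_ac)
  qed
  ultimately show ?thesis by simp
qed

text \<open>The Gaussian transform of an entire power series along y |-> t e^(b y): each monomial
  contributes a Gaussian integral with linear exponent (i x + b n) y, hence the value
  sqrt(2 pi) exp((i x + b n)^2 / 2).\<close>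

lemma gaussian_transform_power_series:
  fixes c :: "nat \<Rightarrow> complex" and b t :: complex and x :: real
  assumes entire: "\<And>r. 0 \<le> r \<Longrightarrow> summable (\<lambda>n. norm (c n) * r ^ n)"
    and moments: "summable (\<lambda>n. norm (c n) * norm t ^ n * exp ((Re b * n)\<^sup>2 / 2))"
  shows "(\<lambda>n. c n * t ^ n * exp ((\<i> * of_real x + b * of_nat n)\<^sup>2 / 2)) sums
           (of_real (1 / sqrt (2 * pi)) *
            (LBINT y. exp (\<i> * of_real (x * y) - of_real (y\<^sup>2 / 2)) *
                      (\<Sum>n. c n * (t * exp (b * of_real y)) ^ n)))"
proof -
  let ?g = "\<lambda>y::real. exp (\<i> * of_real (x * y) - of_real (y\<^sup>2 / 2))"
  let ?w = "\<lambda>y::real. t * exp (b * of_real y)"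
  have monomial: "?g y * ?w y ^ n
      = t ^ n * exp ((\<i> * of_real x + b * of_nat n) * of_real y - of_real (y\<^sup>2 / 2))" for y n
  proof -
    have "?g y * ?w y ^ n = t ^ n * exp ((\<i> * of_real (x * y) - of_real (y\<^sup>2 / 2)) + of_nat n * (b * of_real y))"
      by (simp only: power_mult_distrib exp_of_nat_mult[symmetric] exp_add mult_ac)
    also have "(\<i> * of_real (x * y) - of_real (y\<^sup>2 / 2)) + of_nat n * (b * of_real y)
        = (\<i> * of_real x + b * of_nat n) * of_real y - of_real (y\<^sup>2 / 2)"
      by (simp add: algebra_simps)
    finally show ?thesis .
  qed
  have monomial_norm: "norm (?g y * ?w y ^ n) = norm t ^ n * exp ((Re b * n) * y - y\<^sup>2 / 2)" for y n
    unfolding monomial by (simp add: norm_mult norm_power algebra_simps)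
  have "(\<lambda>n. c n * (LBINT y. ?g y * ?w y ^ n)) sums (LBINT y. ?g y * (\<Sum>n. c n * ?w y ^ n))"
  proof (rule integral_weighted_power_series)
    show "integrable lborel (\<lambda>y. ?g y * ?w y ^ n)" for n
      unfolding monomial by (intro integrable_mult_right gaussian_integral(1))
    show "summable (\<lambda>n. norm (c n * ?w y ^ n))" for y
    proof -
      have "norm (c n * ?w y ^ n) = norm (c n) * (norm t * exp (Re b * y)) ^ n" for n
        by (simp add: norm_mult norm_power)
      then show ?thesis using entire[of "norm t * exp (Re b * y)"] by simp
    qed
    have norm_moment: "norm (c n) * (LBINT y. norm (?g y * ?w y ^ n))
        = sqrt (2 * pi) * (norm (c n) * norm t ^ n * exp ((Re b * n)\<^sup>2 / 2))" for n
      unfolding monomial_norm integral_mult_right_zero gaussian_integral_real(2) by (simp only: mult_ac)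
    show "summable (\<lambda>n. norm (c n) * (LBINT y. norm (?g y * ?w y ^ n)))"
      unfolding norm_moment by (rule summable_mult[OF moments])
  qed
  then have "(\<lambda>n. of_real (1 / sqrt (2 * pi)) * (c n * (LBINT y. ?g y * ?w y ^ n))) sums
      (of_real (1 / sqrt (2 * pi)) * (LBINT y. ?g y * (\<Sum>n. c n * ?w y ^ n)))"
    by (rule sums_mult)
  moreover have "of_real (1 / sqrt (2 * pi)) * (c n * (LBINT y. ?g y * ?w y ^ n))
      = c n * t ^ n * exp ((\<i> * of_real x + b * of_nat n)\<^sup>2 / 2)" for n
    unfolding monomial integral_mult_right_zero gaussian_integral(2) by simp
  ultimately show ?thesis by simp
qed

definition pq_coeff :: "real \<Rightarrow> real \<Rightarrow> real \<Rightarrow> nat \<Rightarrow> real" where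
  "pq_coeff p q \<zeta> n = (q / p) powr (\<zeta> * real n ^ 2 / 2) / pq_fact p q n"

lemma pq_exp_series: "pq_exp p q \<zeta> z = (\<Sum>n. complex_of_real (pq_coeff p q \<zeta> n) * z ^ n)"
  unfolding pq_exp_def pq_coeff_def ..

lemma pq_coeff_shift:
  "pq_coeff p q (\<zeta> + \<delta>) n = pq_coeff p q \<zeta> n * (q / p) powr (\<delta> * real n ^ 2 / 2)"
proof -
  have exponent: "(\<zeta> + \<delta>) * real n ^ 2 / 2 = \<zeta> * real n ^ 2 / 2 + \<delta> * real n ^ 2 / 2"
    by (simp add: field_simps)
  show ?thesis
    unfolding pq_coeff_def exponent powr_add by simp
qed

lemma pq_fact_Suc: "pq_fact p q (Suc n) = pq_fact p q n * (inverse p ^ Suc n - q ^ Suc n)"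
  unfolding pq_fact_def by (subst prod.nat_ivl_Suc') auto

context
  fixes p q :: real
  assumes p_pos: "0 < p" and q_pos: "0 < q" and pq_lt_1: "p * q < 1"
begin

lemma pq_factor_lower_bound:
  assumes "1 \<le> l"
  shows "inverse p ^ l * (1 - p * q) \<le> inverse p ^ l - q ^ l"
proof -
  have "(p * q) ^ l \<le> p * q"
    using power_decreasing[of 1 l "p * q"] assms p_pos q_pos pq_lt_1 by simp
  moreover have factored: "inverse p ^ l - q ^ l = inverse p ^ l * (1 - (p * q) ^ l)"
    using p_pos by (simp add: power_mult_distrib field_simps)
  ultimately show ?thesis
    unfolding factored using p_pos by (intro mult_left_mono) auto
qed

lemma pq_factor_pos:
  assumes "1 \<le> l"
  shows "0 < inverse p ^ l - q ^ l"
proof -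
  have "0 < inverse p ^ l * (1 - p * q)"
    using p_pos pq_lt_1 by simp
  then show ?thesis
    using pq_factor_lower_bound[OF assms] by linarith
qed

lemma pq_fact_pos: "0 < pq_fact p q n"
  unfolding pq_fact_def
proof (rule prod_pos)
  fix l assume "l \<in> {1..n}"
  then show "0 < inverse p ^ l - q ^ l"
    by (intro pq_factor_pos) simp
qed

lemma pq_coeff_pos: "0 < pq_coeff p q \<zeta> n"
  unfolding pq_coeff_def using p_pos q_pos pq_fact_pos by simp

lemma pq_coeff_Suc:
  "pq_coeff p q \<zeta> (Suc n) = pq_coeff p q \<zeta> n *
     ((q / p) powr (\<zeta> / 2) * ((q / p) powr \<zeta>) ^ n / (inverse p ^ Suc n - q ^ Suc n))"
proof -
  have exponent: "\<zeta> * real (Suc n) ^ 2 / 2 = \<zeta> * real n ^ 2 / 2 + (\<zeta> / 2 + real n * \<zeta>)"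
    by (simp add: power2_eq_square field_simps)
  have growth: "(q / p) powr (\<zeta> / 2 + real n * \<zeta>) = (q / p) powr (\<zeta> / 2) * ((q / p) powr \<zeta>) ^ n"
    using p_pos q_pos by (simp add: powr_add powr_power)
  show ?thesis
    unfolding pq_coeff_def pq_fact_Suc exponent
      powr_add[of "q / p" "\<zeta> * real n ^ 2 / 2" "\<zeta> / 2 + real n * \<zeta>"] growth
    by (simp only: times_divide_times_eq)
qed

lemma pq_coeff_ratio_bound:
  "pq_coeff p q \<zeta> (Suc n)
     \<le> pq_coeff p q \<zeta> n * ((q / p) powr (\<zeta> / 2) * p / (1 - p * q) * (p * (q / p) powr \<zeta>) ^ n)"
proof -
  let ?a = "(q / p) powr (\<zeta> / 2) * ((q / p) powr \<zeta>) ^ n"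
  have "?a / (inverse p ^ Suc n - q ^ Suc n) \<le> ?a / (inverse p ^ Suc n * (1 - p * q))"
    using pq_factor_lower_bound[of "Suc n"] pq_factor_pos[of "Suc n"] p_pos pq_lt_1
    by (intro divide_left_mono mult_pos_pos) auto
  also have "\<dots> = (q / p) powr (\<zeta> / 2) * p / (1 - p * q) * (p * (q / p) powr \<zeta>) ^ n"
    using p_pos pq_lt_1 by (simp add: field_simps power_mult_distrib)
  finally show ?thesis
    unfolding pq_coeff_Suc using pq_coeff_pos[of \<zeta> n] by (intro mult_left_mono) auto
qed

lemma pq_coeff_summable:
  assumes s_lt_1: "p * (q / p) powr \<zeta> < 1" and r: "0 \<le> r"
  shows "summable (\<lambda>n. pq_coeff p q \<zeta> n * r ^ n)"
proof -
  let ?C = "(q / p) powr (\<zeta> / 2) * p / (1 - p * q)"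
  let ?s = "p * (q / p) powr \<zeta>"
  have "(\<lambda>n. r * (?C * ?s ^ n)) \<longlonglongrightarrow> r * (?C * 0)"
    using s_lt_1 p_pos by (intro tendsto_intros LIMSEQ_power_zero) auto
  then have "eventually (\<lambda>n. r * (?C * ?s ^ n) < 1 / 2) sequentially"
    by (intro order_tendstoD(2)) auto
  then obtain N where N: "\<And>n. N \<le> n \<Longrightarrow> r * (?C * ?s ^ n) < 1 / 2"
    unfolding eventually_sequentially by blast
  show ?thesis
  proof (rule summable_ratio_test[where c = "1 / 2" and N = N])
    fix n assume "N \<le> n"
    have term_nonneg: "0 \<le> pq_coeff p q \<zeta> n * r ^ n"
      using pq_coeff_pos[of \<zeta> n] r by simp
    have "norm (pq_coeff p q \<zeta> (Suc n) * r ^ Suc n) = pq_coeff p q \<zeta> (Suc n) * r ^ Suc n"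
      using pq_coeff_pos[of \<zeta> "Suc n"] r by simp
    also have "\<dots> \<le> pq_coeff p q \<zeta> n * (?C * ?s ^ n) * r ^ Suc n"
      using pq_coeff_ratio_bound[of \<zeta> n] r by (intro mult_right_mono) auto
    also have "\<dots> = (pq_coeff p q \<zeta> n * r ^ n) * (r * (?C * ?s ^ n))"
      by (simp only: power_Suc mult_ac)
    also have "\<dots> \<le> (pq_coeff p q \<zeta> n * r ^ n) * (1 / 2)"
      using N[OF \<open>N \<le> n\<close>] term_nonneg by (intro mult_left_mono) auto
    finally show "norm (pq_coeff p q \<zeta> (Suc n) * r ^ Suc n) \<le> 1 / 2 * norm (pq_coeff p q \<zeta> n * r ^ n)"
      using term_nonneg by simp
  qed simp
qed

end

text \<open>Shifting zeta by delta then multiplies c_zeta(n) by exp(-delta k^2 n^2), which is exactly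
  the factor a Gaussian integral produces or absorbs.\<close>

context
  fixes p q k :: real
  assumes p_pos: "0 < p" and q_eq: "q = p * exp (- 2 * k\<^sup>2)" and pq_lt_1: "p * q < 1"
begin

lemma q_pos: "0 < q"
  using p_pos q_eq by simp

lemma ratio_powr: "(q / p) powr a = exp (- 2 * a * k\<^sup>2)"
proof -
  have "q / p = exp (- 2 * k\<^sup>2)"
    using p_pos q_eq by simp
  then show ?thesis
    by (simp add: powr_def)
qed

lemma pq_coeff_shift_gaussian:
  "pq_coeff p q (\<zeta> + \<delta>) n = pq_coeff p q \<zeta> n * exp (- \<delta> * k\<^sup>2 * real n ^ 2)"
  unfolding pq_coeff_shift ratio_powr by (simp add: algebra_simps)

lemma pq_coeff_summable_gaussian:
  assumes "p * exp (- 2 * \<zeta> * k\<^sup>2) < 1" and "0 \<le> r"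
  shows "summable (\<lambda>n. pq_coeff p q \<zeta> n * r ^ n)"
proof -
  have "p * (q / p) powr \<zeta> < 1"
    unfolding ratio_powr using assms(1) .
  then show ?thesis
    by (rule pq_coeff_summable[OF p_pos q_pos pq_lt_1 _ assms(2)])
qed

lemma pq_coeff_norm: "norm (complex_of_real (pq_coeff p q \<zeta> n)) = pq_coeff p q \<zeta> n"
  using pq_coeff_pos[OF p_pos q_pos pq_lt_1, of \<zeta> n] by simp

lemma pq_exp_sums:
  assumes "p * exp (- 2 * \<zeta> * k\<^sup>2) < 1"
  shows "(\<lambda>n. complex_of_real (pq_coeff p q \<zeta> n) * z ^ n) sums pq_exp p q \<zeta> z"
proof -
  have "norm (complex_of_real (pq_coeff p q \<zeta> n) * z ^ n) = pq_coeff p q \<zeta> n * norm z ^ n" for n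
    by (simp only: norm_mult norm_power pq_coeff_norm)
  then have "summable (\<lambda>n. norm (complex_of_real (pq_coeff p q \<zeta> n) * z ^ n))"
    using pq_coeff_summable_gaussian[OF assms norm_ge_zero] by simp
  then show ?thesis
    unfolding pq_exp_series by (rule summable_sums[OF summable_norm_cancel])
qed

text \<open>The termwise identity behind part (a): with b = i k the Gaussian factor
  exp((i x + i k n)^2/2) = exp(-(x + k n)^2/2) is real, and it splits as
  exp(-k^2 n^2/2) exp(-k n x) exp(-x^2/2); the first factor raises zeta by 1/2.\<close>

lemma pq_coeff_circle_termwise:
  "complex_of_real (pq_coeff p q (\<zeta> + 1/2) n) * (t * complex_of_real (exp (- k * x))) ^ n
     * complex_of_real (exp (- (x^2) / 2))
   = complex_of_real (pq_coeff p q \<zeta> n) * t ^ n * exp ((\<i> * of_real x + \<i> * of_real k * of_nat n)\<^sup>2 / 2)"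
proof -
  have "exp (- (1/2) * k\<^sup>2 * real n ^ 2) * exp (- k * x) ^ n * exp (- (x^2) / 2)
      = exp (- (1/2) * k\<^sup>2 * real n ^ 2 + real n * (- k * x) + - (x^2) / 2)"
    by (simp only: exp_add exp_of_nat_mult)
  also have "\<dots> = exp (- ((x + k * n)\<^sup>2) / 2)"
    by (rule arg_cong[where f = exp]) (simp add: power2_eq_square field_simps)
  finally have real_part: "pq_coeff p q (\<zeta> + 1/2) n * exp (- k * x) ^ n * exp (- (x^2) / 2)
      = pq_coeff p q \<zeta> n * exp (- ((x + k * n)\<^sup>2) / 2)"
    unfolding pq_coeff_shift_gaussian by (simp only: mult.assoc)
  have "(\<i> * of_real x + \<i> * of_real k * of_nat n)\<^sup>2 / 2 = complex_of_real (- ((x + k * n)\<^sup>2) / 2)"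
    by (simp add: power2_eq_square algebra_simps)
  then have gaussian_factor: "exp ((\<i> * of_real x + \<i> * of_real k * of_nat n)\<^sup>2 / 2)
      = complex_of_real (exp (- ((x + k * n)\<^sup>2) / 2))"
    by (simp only: exp_of_real)
  have "complex_of_real (pq_coeff p q (\<zeta> + 1/2) n) * (t * complex_of_real (exp (- k * x))) ^ n
        * complex_of_real (exp (- (x^2) / 2))
      = t ^ n * complex_of_real (pq_coeff p q (\<zeta> + 1/2) n * exp (- k * x) ^ n * exp (- (x^2) / 2))"
    by (simp add: power_mult_distrib mult_ac)
  also have "\<dots> = complex_of_real (pq_coeff p q \<zeta> n) * t ^ n
      * exp ((\<i> * of_real x + \<i> * of_real k * of_nat n)\<^sup>2 / 2)"
    unfolding real_part gaussian_factor of_real_mult by (simp only: mult_ac)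
  finally show ?thesis .
qed

text \<open>Part (a): the Gaussian transform along the circle y |-> t e^(i k y) raises zeta by 1/2.
  Since Re(i k) = 0, the absolute moments are just those of E^(zeta) at |t|.\<close>

lemma pq_exp_gaussian_transform_circle:
  fixes \<zeta> x :: real and t :: complex
  assumes hyp: "p * exp (- 2 * \<zeta> * k\<^sup>2) < 1"
  shows "pq_exp p q (\<zeta> + 1/2) (t * complex_of_real (exp (- k * x))) * complex_of_real (exp (- (x^2) / 2))
       = complex_of_real (1 / sqrt (2 * pi)) *
         (LBINT y. exp (\<i> * complex_of_real (x * y) - complex_of_real (y^2 / 2))
                   * pq_exp p q \<zeta> (t * exp (\<i> * complex_of_real (k * y))))"
proof -
  define c where "c n = complex_of_real (pq_coeff p q \<zeta> n)" for n
  have entire: "summable (\<lambda>n. norm (c n) * r ^ n)" if "0 \<le> r" for r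
    unfolding c_def pq_coeff_norm by (rule pq_coeff_summable_gaussian[OF hyp that])
  have moments: "summable (\<lambda>n. norm (c n) * norm t ^ n * exp ((Re (\<i> * of_real k) * n)\<^sup>2 / 2))"
    using entire[of "norm t"] by simp
  have series: "(\<Sum>n. c n * (t * exp (\<i> * of_real k * of_real y)) ^ n)
      = pq_exp p q \<zeta> (t * exp (\<i> * complex_of_real (k * y)))" for y
    unfolding pq_exp_series c_def by (simp add: mult.assoc)
  have "(\<lambda>n. c n * t ^ n * exp ((\<i> * of_real x + \<i> * of_real k * of_nat n)\<^sup>2 / 2)) sums
      (complex_of_real (1 / sqrt (2 * pi)) *
       (LBINT y. exp (\<i> * complex_of_real (x * y) - complex_of_real (y^2 / 2))
                 * pq_exp p q \<zeta> (t * exp (\<i> * complex_of_real (k * y)))))"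
    using gaussian_transform_power_series[OF entire moments] unfolding series .
  moreover have "p * exp (- 2 * (\<zeta> + 1/2) * k\<^sup>2) < 1"
  proof -
    have "p * exp (- 2 * (\<zeta> + 1/2) * k\<^sup>2) \<le> p * exp (- 2 * \<zeta> * k\<^sup>2)"
      using p_pos by (intro mult_left_mono) (auto simp: algebra_simps)
    then show ?thesis
      using hyp by linarith
  qed
  then have "(\<lambda>n. complex_of_real (pq_coeff p q (\<zeta> + 1/2) n) * (t * complex_of_real (exp (- k * x))) ^ n
          * complex_of_real (exp (- (x^2) / 2)))
      sums (pq_exp p q (\<zeta> + 1/2) (t * complex_of_real (exp (- k * x))) * complex_of_real (exp (- (x^2) / 2)))"
    by (intro sums_mult2 pq_exp_sums)
  ultimately show ?thesis
    unfolding c_def pq_coeff_circle_termwise by (simp add: sums_unique2)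
qed

text \<open>The termwise identity behind part (b): with b = k the Gaussian factor
  exp((i x + k n)^2/2) splits as exp(k^2 n^2/2) exp(-x^2/2) exp(i k n x); the first factor
  lowers zeta by 1/2.\<close>

lemma pq_coeff_ray_termwise:
  "complex_of_real (pq_coeff p q (\<zeta> - 1/2) n) * (t * exp (\<i> * complex_of_real (k * x))) ^ n
     * complex_of_real (exp (- (x^2) / 2))
   = complex_of_real (pq_coeff p q \<zeta> n) * t ^ n * exp ((\<i> * of_real x + of_real k * of_nat n)\<^sup>2 / 2)"
proof -
  have shift_down: "pq_coeff p q (\<zeta> - 1/2) n = pq_coeff p q \<zeta> n * exp ((k * n)\<^sup>2 / 2)"
    using pq_coeff_shift_gaussian[of \<zeta> "- 1/2" n] by (simp add: power_mult_distrib)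
  have "(\<i> * of_real x + of_real k * of_nat n)\<^sup>2 / 2
      = complex_of_real ((k * n)\<^sup>2 / 2 + - (x^2) / 2) + of_nat n * (\<i> * complex_of_real (k * x))"
    by (simp add: power2_eq_square field_simps)
  then have gaussian_factor: "exp ((\<i> * of_real x + of_real k * of_nat n)\<^sup>2 / 2)
      = complex_of_real (exp ((k * n)\<^sup>2 / 2) * exp (- (x^2) / 2)) * exp (\<i> * complex_of_real (k * x)) ^ n"
    by (simp only: exp_add exp_of_real exp_of_nat_mult)
  have "complex_of_real (pq_coeff p q (\<zeta> - 1/2) n) * (t * exp (\<i> * complex_of_real (k * x))) ^ n
        * complex_of_real (exp (- (x^2) / 2))
      = t ^ n * exp (\<i> * complex_of_real (k * x)) ^ n
        * complex_of_real (pq_coeff p q (\<zeta> - 1/2) n * exp (- (x^2) / 2))"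
    by (simp add: power_mult_distrib mult_ac)
  also have "\<dots> = complex_of_real (pq_coeff p q \<zeta> n) * t ^ n
      * exp ((\<i> * of_real x + of_real k * of_nat n)\<^sup>2 / 2)"
    unfolding shift_down gaussian_factor of_real_mult by (simp only: mult_ac)
  finally show ?thesis .
qed

text \<open>Part (b): the Gaussian transform along the ray y |-> t e^(k y) lowers zeta by 1/2.
  Here Re b = k, and the hypothesis is exactly what makes the absolute moments
  c_zeta(n) |t|^n exp(k^2 n^2/2) = c_(zeta-1/2)(n) |t|^n summable.\<close>

lemma pq_exp_gaussian_transform_ray:
  fixes \<zeta> x :: real and t :: complex
  assumes hyp: "p * exp (- (2 * \<zeta> - 1) * k\<^sup>2) < 1"
  shows "pq_exp p q (\<zeta> - 1/2) (t * exp (\<i> * complex_of_real (k * x))) * complex_of_real (exp (- (x^2) / 2))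
       = complex_of_real (1 / sqrt (2 * pi)) *
         (LBINT y. exp (\<i> * complex_of_real (x * y) - complex_of_real (y^2 / 2))
                   * pq_exp p q \<zeta> (t * complex_of_real (exp (k * y))))"
proof -
  define c where "c n = complex_of_real (pq_coeff p q \<zeta> n)" for n
  have hyp_lowered: "p * exp (- 2 * (\<zeta> - 1/2) * k\<^sup>2) < 1"
    using hyp by (simp add: algebra_simps)
  have "p * exp (- 2 * \<zeta> * k\<^sup>2) \<le> p * exp (- (2 * \<zeta> - 1) * k\<^sup>2)"
    using p_pos by (intro mult_left_mono) (auto simp: algebra_simps)
  then have hyp_\<zeta>: "p * exp (- 2 * \<zeta> * k\<^sup>2) < 1"
    using hyp by linarith
  have entire: "summable (\<lambda>n. norm (c n) * r ^ n)" if "0 \<le> r" for r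
    unfolding c_def pq_coeff_norm by (rule pq_coeff_summable_gaussian[OF hyp_\<zeta> that])
  have "pq_coeff p q (\<zeta> - 1/2) n = pq_coeff p q \<zeta> n * exp ((Re (of_real k) * n)\<^sup>2 / 2)" for n
    using pq_coeff_shift_gaussian[of \<zeta> "- 1/2" n] by (simp add: power_mult_distrib)
  then have moments: "summable (\<lambda>n. norm (c n) * norm t ^ n * exp ((Re (of_real k) * n)\<^sup>2 / 2))"
    unfolding c_def pq_coeff_norm using pq_coeff_summable_gaussian[OF hyp_lowered, of "norm t"]
    by (simp add: mult_ac)
  have series: "(\<Sum>n. c n * (t * exp (of_real k * of_real y)) ^ n)
      = pq_exp p q \<zeta> (t * complex_of_real (exp (k * y)))" for y
    unfolding pq_exp_series c_def by (simp add: of_real_exp)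
  have "(\<lambda>n. c n * t ^ n * exp ((\<i> * of_real x + of_real k * of_nat n)\<^sup>2 / 2)) sums
      (complex_of_real (1 / sqrt (2 * pi)) *
       (LBINT y. exp (\<i> * complex_of_real (x * y) - complex_of_real (y^2 / 2))
                 * pq_exp p q \<zeta> (t * complex_of_real (exp (k * y)))))"
    using gaussian_transform_power_series[OF entire moments] unfolding series .
  moreover have "(\<lambda>n. complex_of_real (pq_coeff p q (\<zeta> - 1/2) n) * (t * exp (\<i> * complex_of_real (k * x))) ^ n
          * complex_of_real (exp (- (x^2) / 2)))
      sums (pq_exp p q (\<zeta> - 1/2) (t * exp (\<i> * complex_of_real (k * x))) * complex_of_real (exp (- (x^2) / 2)))"
    by (intro sums_mult2 pq_exp_sums hyp_lowered)
  ultimately show ?thesis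
    unfolding c_def pq_coeff_ray_termwise by (simp add: sums_unique2)
qed

end

theorem mainTheorem6:
  fixes p k q \<zeta> x :: real and t :: complex
  assumes "p > 0" and "k > 0" and "q = p * exp (- 2 * k^2)"
    and "0 < p * q" and "p * q < 1"
  shows "(p * exp (- 2 * \<zeta> * k^2) < 1 \<longrightarrow>
            pq_exp p q (\<zeta> + 1/2) (t * complex_of_real (exp (- k * x))) * complex_of_real (exp (- (x^2) / 2))
            = complex_of_real (1 / sqrt (2 * pi)) *
              (LBINT y. exp (\<i> * complex_of_real (x * y) - complex_of_real (y^2 / 2))
                        * pq_exp p q \<zeta> (t * exp (\<i> * complex_of_real (k * y)))))
       \<and> (p * exp (- (2 * \<zeta> - 1) * k^2) < 1 \<longrightarrow>
            pq_exp p q (\<zeta> - 1/2) (t * exp (\<i> * complex_of_real (k * x))) * complex_of_real (exp (- (x^2) / 2))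
            = complex_of_real (1 / sqrt (2 * pi)) *
              (LBINT y. exp (\<i> * complex_of_real (x * y) - complex_of_real (y^2 / 2))
                        * pq_exp p q \<zeta> (t * complex_of_real (exp (k * y)))))"
  using pq_exp_gaussian_transform_circle[OF assms(1,3,5)]
    pq_exp_gaussian_transform_ray[OF assms(1,3,5)]
  by blast

end
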